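(* For every finite nonempty subset $C \subset \mathbb N_{\ge 2}$ there is a finitely generated Krull monoid $H$ with finite class group such that $\mathcal R(H) = \operatorname{Ca}(H) = C$ and $\daleth^*(H) = C\setminus\{2\}$.
   Context: A monoid is a commutative cancellative semigroup with identity; $\mathcal A(H)$ denotes its atoms, $H_{\mathrm{red}}=H/H^\times$. For $a\in H$, $\mathsf Z(a)$ is the set of factorizations of $a$ (elements of the free abelian monoid on $\mathcal A(H_{\mathrm{red}})$ multiplying to $aH^\times$), $|z|$ is the number of atoms in $z$, and $\mathsf L(a)=\{|z|: z\in\mathsf Z(a)\}$. $\daleth^*(H) = \{\min(\mathsf L(uv)\setminus\{2\}) : u,v \in \mathcal A(H),\ |\mathsf L(uv)|>1\}$. Distance: writing $z = u_1\cdots u_k v_1\cdots v_\ell$, $z'=u_1\cdots u_k w_1\cdots w_m$ with no $v_i$ equal to any $w_j$, $\mathsf d(z,z')=\max\{\ell,m\}$. An $N$-chain from $z$ to $z'$ in $\mathsf Z(a)$ is a sequence $z=z_0,\dots,z_n=z'$ in $\mathsf Z(a)$ with $\mathsf d(z_{i-1},z_i)\le N$. $\mathsf c(a)$ is the least $N$ such that any two factorizations of $a$ are connected by an $N$-chain; $\operatorname{Ca}(H)=\{\mathsf c(a): a\in H,\ |\mathsf Z(a)|>1\}$. $\mathcal R(H)$ is the set of $d\in\mathbb N_{\ge2}$ such that some $a\in H$ has distinct $z,z'\in\mathsf Z(a)$ with $\mathsf d(z,z')=d$ not connected by any $(d-1)$-chain. A Krull monoid is a monoid $H$ admitting a divisor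 theory $H_{\mathrm{red}}\hookrightarrow\mathcal F(P)$ into a free abelian monoid (a divisor homomorphism such that every element of $\mathcal F(P)$ is a gcd of finitely many elements of $H_{\mathrm{red}}$); its class group is $\mathsf q(\mathcal F(P))/\mathsf q(H_{\mathrm{red}})$. *)

theory Defs
  imports "HOL-Algebra.Divisibility" "HOL-Library.Multiset"
begin

text \<open>A factorization of a
  is the multiset of associate classes of a list of atoms whose product is
  associated to a; this is an element of the free abelian monoid on the atoms of G_red.\<close>

definition atoms :: "('a, 'b) monoid_scheme \<Rightarrow> 'a set" where
  "atoms G = {u \<in> carrier G. irreducible G u}"

definition Zs :: "('a, 'b) monoid_scheme \<Rightarrow> 'a \<Rightarrow> 'a set multiset set" where
  "Zs G a = {fmset G fs | fs. set fs \<subseteq> carrier G \<and> wfactors G fs a}"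

definition Ls :: "('a, 'b) monoid_scheme \<Rightarrow> 'a \<Rightarrow> nat set" where
  "Ls G a = size ` Zs G a"

text \<open>Distance: after removing the common part (gcd), the maximum of the remaining lengths.\<close>
definition fdist :: "'c multiset \<Rightarrow> 'c multiset \<Rightarrow> nat" where
  "fdist z z' = max (size (z - z')) (size (z' - z))"

definition is_chain :: "('a, 'b) monoid_scheme \<Rightarrow> 'a \<Rightarrow> nat \<Rightarrow> 'a set multiset \<Rightarrow> 'a set multiset \<Rightarrow> bool" where
  "is_chain G a N z z' \<longleftrightarrow> (\<exists>zs. zs \<noteq> [] \<and> hd zs = z \<and> last zs = z' \<and> set zs \<subseteq> Zs G a \<and>
      (\<forall>i. Suc i < length zs \<longrightarrow> fdist (zs ! i) (zs ! Suc i) \<le> N))"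

definition all_chained :: "('a, 'b) monoid_scheme \<Rightarrow> 'a \<Rightarrow> nat \<Rightarrow> bool" where
  "all_chained G a N \<longleftrightarrow> (\<forall>z\<in>Zs G a. \<forall>z'\<in>Zs G a. is_chain G a N z z')"

definition is_catenary_degree :: "('a, 'b) monoid_scheme \<Rightarrow> 'a \<Rightarrow> nat \<Rightarrow> bool" where
  "is_catenary_degree G a N \<longleftrightarrow> all_chained G a N \<and> (\<forall>M<N. \<not> all_chained G a M)"

definition Ca :: "('a, 'b) monoid_scheme \<Rightarrow> nat set" where
  "Ca G = {N. \<exists>a\<in>carrier G. (\<exists>z\<in>Zs G a. \<exists>z'\<in>Zs G a. z \<noteq> z') \<and> is_catenary_degree G a N}"

definition Rset :: "('a, 'b) monoid_scheme \<Rightarrow> nat set" where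
  "Rset G = {d. d \<ge> 2 \<and> (\<exists>a\<in>carrier G. \<exists>z\<in>Zs G a. \<exists>z'\<in>Zs G a. z \<noteq> z' \<and>
      fdist z z' = d \<and> \<not> is_chain G a (d - 1) z z')}"

definition daleth_star :: "('a, 'b) monoid_scheme \<Rightarrow> nat set" where
  "daleth_star G = {Inf (Ls G (u \<otimes>\<^bsub>G\<^esub> v) - {2}) | u v. u \<in> atoms G \<and> v \<in> atoms G \<and>
      (\<exists>l\<in>Ls G (u \<otimes>\<^bsub>G\<^esub> v). \<exists>l'\<in>Ls G (u \<otimes>\<^bsub>G\<^esub> v). l \<noteq> l')}"

definition finitely_generated :: "('a, 'b) monoid_scheme \<Rightarrow> bool" where
  "finitely_generated G \<longleftrightarrow> (\<exists>E. finite E \<and> E \<subseteq> carrier G \<and>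
      (\<forall>a\<in>carrier G. \<exists>es. set es \<subseteq> E \<and> a = foldr (\<otimes>\<^bsub>G\<^esub>) es \<one>\<^bsub>G\<^esub>))"

text \<open>phi : H \<rightarrow> F(P) (free abelian monoid F(P) = multisets supported in P).
  A monoid homomorphism H \<rightarrow> F(P) is the same as one H_red \<rightarrow> F(P).\<close>
definition divisor_theory :: "('a, 'b) monoid_scheme \<Rightarrow> 'p set \<Rightarrow> ('a \<Rightarrow> 'p multiset) \<Rightarrow> bool" where
  "divisor_theory G P \<phi> \<longleftrightarrow>
     \<phi> \<one>\<^bsub>G\<^esub> = {#} \<and>
     (\<forall>a\<in>carrier G. \<forall>b\<in>carrier G. \<phi> (a \<otimes>\<^bsub>G\<^esub> b) = \<phi> a + \<phi> b) \<and>
     (\<forall>a\<in>carrier G. set_mset (\<phi> a) \<subseteq> P) \<and>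
     (\<forall>a\<in>carrier G. \<forall>b\<in>carrier G. \<phi> a \<subseteq># \<phi> b \<longrightarrow> a divides\<^bsub>G\<^esub> b) \<and>
     (\<forall>m. set_mset m \<subseteq> P \<longrightarrow> (\<exists>A. finite A \<and> A \<noteq> {} \<and> A \<subseteq> carrier G \<and>
         (\<forall>a\<in>A. m \<subseteq># \<phi> a) \<and> (\<forall>m'. (\<forall>a\<in>A. m' \<subseteq># \<phi> a) \<longrightarrow> m' \<subseteq># m)))"

text \<open>Class group q(F(P))/q(phi(H)): elements of q(F(P)) are represented by pairs (x,y)
  (standing for x - y); two pairs are identified iff their difference lies in q(phi(H)).\<close>
definition class_rel :: "('a, 'b) monoid_scheme \<Rightarrow> 'p set \<Rightarrow> ('a \<Rightarrow> 'p multiset) \<Rightarrow>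
    ('p multiset \<times> 'p multiset) rel" where
  "class_rel G P \<phi> = {((x, y), (x', y')). set_mset x \<subseteq> P \<and> set_mset y \<subseteq> P \<and>
      set_mset x' \<subseteq> P \<and> set_mset y' \<subseteq> P \<and>
      (\<exists>a\<in>carrier G. \<exists>b\<in>carrier G. x + y' + \<phi> b = x' + y + \<phi> a)}"

definition class_group :: "('a, 'b) monoid_scheme \<Rightarrow> 'p set \<Rightarrow> ('a \<Rightarrow> 'p multiset) \<Rightarrow>
    ('p multiset \<times> 'p multiset) set set" where
  "class_group G P \<phi> = {(x, y). set_mset x \<subseteq> P \<and> set_mset y \<subseteq> P} // class_rel G P \<phi>"

definition krull_monoid_via :: "('a, 'b) monoid_scheme \<Rightarrow> 'p set \<Rightarrow> ('a \<Rightarrow> 'p multiset) \<Rightarrow> bool" where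
  "krull_monoid_via G P \<phi> \<longleftrightarrow> comm_monoid_cancel G \<and> divisor_theory G P \<phi>"

end

theory Submission
  imports Defs "HOL-Library.Countable"
begin

text \<open>
  For d \<in> C let p_d = 2d and q_d = 2d + 1, and let H consist of the multisets over these primes
  whose multiplicities of p_d and q_d agree modulo d for every d \<in> C; H is a Krull monoid with
  class group the product of the groups Z/dZ. Its atoms are X_d = p_d^d, Y_d = q_d^d and
  W_d = p_d q_d, and the only relation among them is X_d Y_d = W_d^d. Hence two factorizations of
  the same element differ, block by block, by multiples of this relation: changing the d-block
  costs distance at least d, and one application of the relation costs exactly d. So the catenary
  degree of an element is the largest d whose block varies over its factorizations, no chain can
  undercut that bound, and X_d Y_d, whose only factorizations are X_d Y_d and W_d^d, realises d in
  all three invariants.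
\<close>

section \<open>Chains of factorizations\<close>

definition chain_in :: "'c multiset set \<Rightarrow> nat \<Rightarrow> 'c multiset \<Rightarrow> 'c multiset \<Rightarrow> bool" where
  "chain_in S N z z' \<longleftrightarrow> (\<exists>zs. zs \<noteq> [] \<and> hd zs = z \<and> last zs = z' \<and> set zs \<subseteq> S \<and>
      (\<forall>i. Suc i < length zs \<longrightarrow> fdist (zs ! i) (zs ! Suc i) \<le> N))"

lemma is_chain_eq_chain_in: "is_chain G a = chain_in (Zs G a)"
  by (intro ext) (simp add: is_chain_def chain_in_def)

lemma fdist_self [simp]: "fdist z z = 0"
  by (simp add: fdist_def)

lemma fdist_image_mset_le: "fdist (image_mset f M) (image_mset f N) \<le> fdist M N"
proof -
  have "size (image_mset f K - image_mset f L) \<le> size (K - L)" for K L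
  proof -
    have "image_mset f K \<subseteq># image_mset f (K - L) + image_mset f L"
      by (metis image_mset_union image_mset_subseteq_mono subset_eq_diff_conv subset_mset.order_refl)
    then have "image_mset f K - image_mset f L \<subseteq># image_mset f (K - L)"
      by (simp add: subset_eq_diff_conv)
    then show ?thesis by (metis size_image_mset size_mset_mono)
  qed
  then show ?thesis by (metis fdist_def max.mono)
qed

lemma fdist_image_mset_inj:
  assumes "inj_on f A" "set_mset M \<subseteq> A" "set_mset N \<subseteq> A"
  shows "fdist (image_mset f M) (image_mset f N) = fdist M N"
proof (rule antisym[OF fdist_image_mset_le])
  have "image_mset (inv_into A f) (image_mset f K) = K" if "set_mset K \<subseteq> A" for K
    using that assms(1) by (induction K) auto
  then show "fdist M N \<le> fdist (image_mset f M) (image_mset f N)"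
    using fdist_image_mset_le[of "inv_into A f" "image_mset f M" "image_mset f N"] assms(2,3) by simp
qed

lemma fdist_exchange_le: "fdist Z (Z - A + B) \<le> max (size A) (size B)"
proof -
  have "Z - (Z - A + B) \<subseteq># A" "(Z - A + B) - Z \<subseteq># B"
    by (auto simp: subseteq_mset_def)
  then show ?thesis by (auto simp: fdist_def intro: size_mset_mono max.coboundedI1 max.coboundedI2)
qed

lemma exchange_diff:
  assumes "A \<subseteq># Z - Z'" "B \<subseteq># Z' - Z"
  shows "(Z - A + B) - Z' = (Z - Z') - A"
proof (rule multiset_eqI)
  fix c
  have "count A c \<le> count Z c - count Z' c" "count B c \<le> count Z' c - count Z c"
    using assms by (auto simp: subseteq_mset_def)
  then show "count (Z - A + B - Z') c = count (Z - Z' - A) c" by simp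
qed

lemma chain_in_refl: "z \<in> S \<Longrightarrow> chain_in S N z z"
  unfolding chain_in_def by (intro exI[of _ "[z]"]) auto

lemma chain_in_Cons:
  assumes "chain_in S N z1 z'" "z \<in> S" "fdist z z1 \<le> N"
  shows "chain_in S N z z'"
proof -
  obtain zs where zs: "zs \<noteq> []" "hd zs = z1" "last zs = z'" "set zs \<subseteq> S"
    "\<forall>i. Suc i < length zs \<longrightarrow> fdist (zs ! i) (zs ! Suc i) \<le> N"
    using assms(1) unfolding chain_in_def by blast
  have "fdist ((z # zs) ! i) ((z # zs) ! Suc i) \<le> N" if "Suc i < length (z # zs)" for i
    using that zs assms(3) by (cases i) (auto simp: hd_conv_nth)
  then show ?thesis
    unfolding chain_in_def using zs assms(2) by (intro exI[of _ "z # zs"]) auto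
qed

lemma chain_in_map:
  assumes "chain_in S N z z'" "g ` S \<subseteq> T"
    and "\<And>x y. x \<in> S \<Longrightarrow> y \<in> S \<Longrightarrow> fdist (g x) (g y) \<le> fdist x y"
  shows "chain_in T N (g z) (g z')"
proof -
  obtain zs where zs: "zs \<noteq> []" "hd zs = z" "last zs = z'" "set zs \<subseteq> S"
    "\<forall>i. Suc i < length zs \<longrightarrow> fdist (zs ! i) (zs ! Suc i) \<le> N"
    using assms(1) unfolding chain_in_def by blast
  have "fdist (g (zs ! i)) (g (zs ! Suc i)) \<le> N" if "Suc i < length zs" for i
  proof -
    have "zs ! i \<in> S" "zs ! Suc i \<in> S"
      using that zs(4) by (simp_all add: subset_iff)
    then show ?thesis
      using that zs(5) assms(3) le_trans by blast
  qed
  then show ?thesis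
    unfolding chain_in_def using zs assms(2)
    by (intro exI[of _ "map g zs"]) (force simp: hd_map last_map)
qed

lemma chain_in_image_mset_iff:
  assumes "inj_on f A" "\<And>z. z \<in> S \<Longrightarrow> set_mset z \<subseteq> A" "z \<in> S" "z' \<in> S"
  shows "chain_in (image_mset f ` S) N (image_mset f z) (image_mset f z') \<longleftrightarrow> chain_in S N z z'"
proof
  have inv: "image_mset (inv_into A f) (image_mset f z) = z" if "z \<in> S" for z
    using assms(1) assms(2)[OF that] by (induction z) auto
  assume "chain_in (image_mset f ` S) N (image_mset f z) (image_mset f z')"
  then have "chain_in S N (image_mset (inv_into A f) (image_mset f z)) (image_mset (inv_into A f) (image_mset f z'))"
    by (rule chain_in_map) (auto simp: inv fdist_image_mset_le)
  then show "chain_in S N z z'"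
    using inv assms(3,4) by simp
next
  assume "chain_in S N z z'"
  then show "chain_in (image_mset f ` S) N (image_mset f z) (image_mset f z')"
    by (rule chain_in_map) (auto simp: fdist_image_mset_le)
qed

lemma exists_adjacent_neq:
  assumes "zs \<noteq> []" "p (hd zs) \<noteq> p (last zs)"
  shows "\<exists>i. Suc i < length zs \<and> p (zs ! i) \<noteq> p (zs ! Suc i)"
  using assms
proof (induction zs)
  case (Cons x xs)
  show ?case
  proof (cases "p x = p (hd xs)")
    case True
    with Cons obtain i where "Suc i < length xs" "p (xs ! i) \<noteq> p (xs ! Suc i)"
      by (cases xs) auto
    then show ?thesis by (intro exI[of _ "Suc i"]) simp
  next
    case False
    with Cons.prems show ?thesis by (intro exI[of _ 0]) (cases xs; simp)
  qed
qed simp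

lemma chain_in_lower_bound:
  assumes "chain_in S N z z'" "p z \<noteq> p z'"
    and "\<And>x y. x \<in> S \<Longrightarrow> y \<in> S \<Longrightarrow> p x \<noteq> p y \<Longrightarrow> d \<le> fdist x y"
  shows "d \<le> N"
proof -
  obtain zs where zs: "zs \<noteq> []" "hd zs = z" "last zs = z'" "set zs \<subseteq> S"
    "\<forall>i. Suc i < length zs \<longrightarrow> fdist (zs ! i) (zs ! Suc i) \<le> N"
    using assms(1) unfolding chain_in_def by blast
  then obtain i where "Suc i < length zs" "p (zs ! i) \<noteq> p (zs ! Suc i)"
    using exists_adjacent_neq[of zs p] assms(2) by blast
  moreover have "zs ! i \<in> S" "zs ! Suc i \<in> S"
    using \<open>Suc i < length zs\<close> zs(4) by (simp_all add: subset_iff)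
  ultimately show ?thesis
    using zs(5) assms(3) le_trans by blast
qed

lemma finite_quotient_by_invariant:
  assumes "\<And>q q'. q \<in> A \<Longrightarrow> (q, q') \<in> R \<longleftrightarrow> q' \<in> A \<and> f q' = f q" "finite (f ` A)"
  shows "finite (A // R)"
proof -
  have "A // R \<subseteq> (\<lambda>r. {q' \<in> A. f q' = r}) ` f ` A"
    unfolding quotient_def using assms(1) by auto
  then show ?thesis using assms(2) finite_surj by blast
qed

section \<open>The monoid\<close>

text \<open>The monoid has to live on nat, so its elements, multisets of primes, are encoded as numbers
  via sorted lists.\<close>

definition nat_of_mset :: "nat multiset \<Rightarrow> nat" where
  "nat_of_mset m = to_nat (sorted_list_of_multiset m)"

definition mset_of_nat :: "nat \<Rightarrow> nat multiset" where
  "mset_of_nat n = mset (from_nat n :: nat list)"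

lemma mset_of_nat_of_mset [simp]: "mset_of_nat (nat_of_mset m) = m"
  by (simp add: nat_of_mset_def mset_of_nat_def)

definition imbalance :: "nat multiset \<Rightarrow> nat \<Rightarrow> int" where
  "imbalance m d = int (count m (2 * d)) - int (count m (2 * d + 1))"

lemma imbalance_add [simp]: "imbalance (m + n) d = imbalance m d + imbalance n d"
  by (simp add: imbalance_def)

lemma imbalance_diff: "m \<subseteq># n \<Longrightarrow> imbalance (n - m) d = imbalance n d - imbalance m d"
  by (simp add: imbalance_def subseteq_mset_def of_nat_diff)

definition prime_set :: "nat set \<Rightarrow> nat set" where
  "prime_set C = {q. \<exists>d\<in>C. q = 2 * d \<or> q = 2 * d + 1}"

definition balanced_msets :: "nat set \<Rightarrow> nat multiset set" where
  "balanced_msets C = {m. set_mset m \<subseteq> prime_set C \<and> (\<forall>d\<in>C. int d dvd imbalance m d)}"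

definition balanced_monoid :: "nat set \<Rightarrow> nat monoid" where
  "balanced_monoid C = \<lparr>carrier = nat_of_mset ` balanced_msets C,
     mult = (\<lambda>a b. nat_of_mset (mset_of_nat a + mset_of_nat b)), one = nat_of_mset {#}\<rparr>"

lemma balanced_msets_empty [simp]: "{#} \<in> balanced_msets C"
  by (simp add: balanced_msets_def imbalance_def)

lemma balanced_msets_add: "m \<in> balanced_msets C \<Longrightarrow> n \<in> balanced_msets C \<Longrightarrow> m + n \<in> balanced_msets C"
  by (auto simp: balanced_msets_def)

lemma balanced_msets_diff:
  assumes "m \<in> balanced_msets C" "n \<in> balanced_msets C" "m \<subseteq># n"
  shows "n - m \<in> balanced_msets C"
  using assms by (auto simp: balanced_msets_def imbalance_diff dest: in_diffD)

lemma carrier_balanced_monoid_iff: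
  "a \<in> carrier (balanced_monoid C) \<longleftrightarrow> mset_of_nat a \<in> balanced_msets C \<and> a = nat_of_mset (mset_of_nat a)"
  by (auto simp: balanced_monoid_def)

lemma nat_of_mset_in_carrier [simp]:
  "nat_of_mset m \<in> carrier (balanced_monoid C) \<longleftrightarrow> m \<in> balanced_msets C"
  by (simp add: carrier_balanced_monoid_iff)

lemma mset_of_nat_mult [simp]:
  "mset_of_nat (a \<otimes>\<^bsub>balanced_monoid C\<^esub> b) = mset_of_nat a + mset_of_nat b"
  by (simp add: balanced_monoid_def)

lemma mset_of_nat_one [simp]: "mset_of_nat \<one>\<^bsub>balanced_monoid C\<^esub> = {#}"
  by (simp add: balanced_monoid_def)

lemma balanced_monoid_eqI:
  "a \<in> carrier (balanced_monoid C) \<Longrightarrow> b \<in> carrier (balanced_monoid C) \<Longrightarrow>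
     mset_of_nat a = mset_of_nat b \<Longrightarrow> a = b"
  by (metis carrier_balanced_monoid_iff)

lemma comm_monoid_cancel_balanced_monoid: "comm_monoid_cancel (balanced_monoid C)"
proof (rule comm_monoid_cancelI)
  show "comm_monoid (balanced_monoid C)"
    by (rule comm_monoidI)
      (auto simp: balanced_monoid_def balanced_msets_add ac_simps)
qed (metis add_right_cancel balanced_monoid_eqI mset_of_nat_mult)

lemma divides_balanced_monoid_iff:
  assumes "a \<in> carrier (balanced_monoid C)" "b \<in> carrier (balanced_monoid C)"
  shows "a divides\<^bsub>balanced_monoid C\<^esub> b \<longleftrightarrow> mset_of_nat a \<subseteq># mset_of_nat b"
proof
  assume "a divides\<^bsub>balanced_monoid C\<^esub> b"
  then show "mset_of_nat a \<subseteq># mset_of_nat b" unfolding factor_def by auto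
next
  interpret comm_monoid_cancel "balanced_monoid C"
    by (rule comm_monoid_cancel_balanced_monoid)
  assume sub: "mset_of_nat a \<subseteq># mset_of_nat b"
  define c where "c = nat_of_mset (mset_of_nat b - mset_of_nat a)"
  have "c \<in> carrier (balanced_monoid C)"
    using assms sub by (simp add: c_def carrier_balanced_monoid_iff balanced_msets_diff)
  moreover have "b = a \<otimes>\<^bsub>balanced_monoid C\<^esub> c"
    using assms sub calculation by (intro balanced_monoid_eqI) (auto simp: c_def)
  ultimately show "a divides\<^bsub>balanced_monoid C\<^esub> b" unfolding factor_def by blast
qed

lemma associated_balanced_monoid_iff:
  assumes "a \<in> carrier (balanced_monoid C)" "b \<in> carrier (balanced_monoid C)"
  shows "a \<sim>\<^bsub>balanced_monoid C\<^esub> b \<longleftrightarrow> a = b"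
  using assms by (auto simp: associated_def divides_balanced_monoid_iff
      intro: balanced_monoid_eqI subset_mset.antisym)

lemma assocs_balanced_monoid:
  "a \<in> carrier (balanced_monoid C) \<Longrightarrow> assocs (balanced_monoid C) a = {a}"
  by (auto simp: eq_closure_of_def elem_def associated_balanced_monoid_iff)

lemma Units_balanced_monoid: "Units (balanced_monoid C) = {nat_of_mset {#}}"
  by (auto simp: Units_def balanced_monoid_def dest!: arg_cong[where f = mset_of_nat])

lemma irreducible_balanced_monoid_iff:
  assumes "a \<in> carrier (balanced_monoid C)"
  shows "irreducible (balanced_monoid C) a \<longleftrightarrow>
    mset_of_nat a \<noteq> {#} \<and> (\<forall>m\<in>balanced_msets C. m \<subset># mset_of_nat a \<longrightarrow> m = {#})"
proof -
  have unit: "x \<in> Units (balanced_monoid C) \<longleftrightarrow> mset_of_nat x = {#}"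
    if "x \<in> carrier (balanced_monoid C)" for x
    using that by (auto simp: Units_balanced_monoid carrier_balanced_monoid_iff)
  have proper: "properfactor (balanced_monoid C) b a \<longleftrightarrow> mset_of_nat b \<subset># mset_of_nat a"
    if "b \<in> carrier (balanced_monoid C)" for b
    using that assms
    by (auto simp: properfactor_def divides_balanced_monoid_iff subset_mset.less_le_not_le)
  show ?thesis
    unfolding irreducible_def using assms
    by (auto simp: unit proper carrier_balanced_monoid_iff)
      (metis mset_of_nat_of_mset nat_of_mset_in_carrier)
qed

section \<open>Atoms and factorizations\<close>

datatype code = X nat | Y nat | W nat

fun atom_mset :: "code \<Rightarrow> nat multiset" where
  "atom_mset (X d) = replicate_mset d (2 * d)"
| "atom_mset (Y d) = replicate_mset d (2 * d + 1)"
| "atom_mset (W d) = {#2 * d, 2 * d + 1#}"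

definition codes :: "nat set \<Rightarrow> code set" where
  "codes C = X ` C \<union> Y ` C \<union> W ` C"

definition eval_codes :: "code multiset \<Rightarrow> nat multiset" where
  "eval_codes Z = \<Sum>\<^sub># (image_mset atom_mset Z)"

definition code_factorizations :: "nat set \<Rightarrow> nat multiset \<Rightarrow> code multiset set" where
  "code_factorizations C e = {Z. set_mset Z \<subseteq> codes C \<and> eval_codes Z = e}"

lemma even_neq_odd [simp]: "2 * (a::nat) \<noteq> Suc (2 * b)" "Suc (2 * b) \<noteq> 2 * a"
  by presburger+

lemma eval_codes_empty [simp]: "eval_codes {#} = {#}"
  and eval_codes_add_mset [simp]: "eval_codes (add_mset c Z) = atom_mset c + eval_codes Z"
  and eval_codes_union [simp]: "eval_codes (Z + Z') = eval_codes Z + eval_codes Z'"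
  by (simp_all add: eval_codes_def)

lemma count_eval_codes_even: "count (eval_codes Z) (2 * d) = d * count Z (X d) + count Z (W d)"
proof (induction Z)
  case (add c Z)
  then show ?case by (cases c) auto
qed simp

lemma count_eval_codes_odd: "count (eval_codes Z) (2 * d + 1) = d * count Z (Y d) + count Z (W d)"
proof (induction Z)
  case (add c Z)
  then show ?case by (cases c) auto
qed simp

lemma finite_codes: "finite C \<Longrightarrow> finite (codes C)"
  by (simp add: codes_def)

lemma atom_mset_balanced: "c \<in> codes C \<Longrightarrow> atom_mset c \<in> balanced_msets C"
  by (cases c) (auto simp: codes_def balanced_msets_def prime_set_def imbalance_def split: if_splits)

lemma eval_codes_balanced: "set_mset Z \<subseteq> codes C \<Longrightarrow> eval_codes Z \<in> balanced_msets C"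
  by (induction Z) (auto intro: balanced_msets_add atom_mset_balanced)

lemma atom_mset_nonempty: "C \<subseteq> {2..} \<Longrightarrow> c \<in> codes C \<Longrightarrow> atom_mset c \<noteq> {#}"
  by (auto simp: codes_def)

lemma inj_on_atom_mset: "C \<subseteq> {2..} \<Longrightarrow> inj_on atom_mset (codes C)"
proof (rule inj_onI)
  fix c c' assume C: "C \<subseteq> {2..}" and cc': "c \<in> codes C" "c' \<in> codes C" "atom_mset c = atom_mset c'"
  obtain d d' where dd': "c \<in> {X d, Y d, W d}" "c' \<in> {X d', Y d', W d'}" "0 < d" "0 < d'"
    using C cc'(1,2) by (fastforce simp: codes_def)
  have "set_mset (atom_mset c) = set_mset (atom_mset c')"
    using cc'(3) by simp
  with dd' show "c = c'"
    by (elim insertE emptyE; simp add: doubleton_eq_iff; presburger)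
qed

lemma exists_atom_mset_subseteq:
  assumes "m \<in> balanced_msets C" "m \<noteq> {#}"
  obtains c where "c \<in> codes C" "atom_mset c \<subseteq># m"
proof -
  obtain q where "q \<in># m" using assms(2) by blast
  then obtain d where d: "d \<in> C" "q = 2 * d \<or> q = 2 * d + 1" "0 < count m q"
    using assms(1) by (auto simp: balanced_msets_def prime_set_def)
  have dvd: "int d dvd int (count m (2 * d)) - int (count m (2 * d + 1))"
    using assms(1) d(1) by (auto simp: balanced_msets_def imbalance_def)
  consider "0 < count m (2 * d)" "0 < count m (2 * d + 1)" | "count m (2 * d + 1) = 0" | "count m (2 * d) = 0"
    by linarith
  then show thesis
  proof cases
    case 1
    then have "atom_mset (W d) \<subseteq># m"
      by (auto simp: subseteq_mset_def)
    then show thesis by (rule that[of "W d", rotated]) (simp add: codes_def d(1))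
  next
    case 2
    then have "0 < count m (2 * d)" using d(2,3) by (elim disjE) simp_all
    with 2 dvd have "d \<le> count m (2 * d)" by (intro dvd_imp_le) simp_all
    then have "atom_mset (X d) \<subseteq># m" by (simp flip: count_le_replicate_mset_subset_eq)
    then show thesis by (rule that[of "X d", rotated]) (simp add: codes_def d(1))
  next
    case 3
    then have "0 < count m (2 * d + 1)" using d(2,3) by (elim disjE) simp_all
    with 3 dvd have "d \<le> count m (2 * d + 1)" by (intro dvd_imp_le) (simp_all add: dvd_diff_commute)
    then have "atom_mset (Y d) \<subseteq># m" by (simp flip: count_le_replicate_mset_subset_eq)
    then show thesis by (rule that[of "Y d", rotated]) (simp add: codes_def d(1))
  qed
qed

lemma atom_mset_minimal:
  assumes "C \<subseteq> {2..}" "c \<in> codes C" "m \<in> balanced_msets C" "m \<subseteq># atom_mset c"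
  shows "m = {#} \<or> m = atom_mset c"
proof -
  obtain d where d: "d \<in> C" "c \<in> {X d, Y d, W d}" using assms(2) by (auto simp: codes_def)
  have "2 \<le> d" using assms(1) d(1) by auto
  have dvd: "int d dvd int (count m (2 * d)) - int (count m (2 * d + 1))"
    using assms(3) d(1) by (auto simp: balanced_msets_def imbalance_def)
  have le: "count m x \<le> count (atom_mset c) x" for x
    using assms(4) by (simp add: subseteq_mset_def)
  show ?thesis
  proof (cases "c = W d")
    case True
    have le1: "count m (2 * d) \<le> 1" "count m (2 * d + 1) \<le> 1"
      using le[of "2 * d"] le[of "2 * d + 1"] True by auto
    have same: "count m (2 * d) = count m (2 * d + 1)"
    proof (rule ccontr)
      assume "count m (2 * d) \<noteq> count m (2 * d + 1)"
      with le1 have "\<bar>int (count m (2 * d)) - int (count m (2 * d + 1))\<bar> = 1" by linarith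
      with dvd have "int d dvd 1" by (metis dvd_abs_iff)
      with \<open>2 \<le> d\<close> show False by simp
    qed
    have outside: "count m x = 0" if "x \<noteq> 2 * d" "x \<noteq> 2 * d + 1" for x
      using le[of x] that True by simp
    show ?thesis
    proof (cases "count m (2 * d) = 0")
      case True
      then have "m = {#}"
        using outside same by (metis count_empty multiset_eqI)
      then show ?thesis ..
    next
      case False
      with le1 same have "count m (2 * d) = 1" "count m (2 * d + 1) = 1"
        by linarith+
      with \<open>c = W d\<close> have "m = atom_mset c"
        by (intro multiset_eqI) (auto simp: outside)
      then show ?thesis ..
    qed
  next
    case False
    then obtain p where p: "atom_mset c = replicate_mset d p" "int d dvd int (count m p)"
      using d(2) le[of "2 * d"] le[of "2 * d + 1"] dvd by (auto simp: dvd_diff_commute)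
    obtain k where "k \<le> d" "m = replicate_mset k p"
      using assms(4) p(1) by (auto elim: msubseteq_replicate_msetE)
    with p show ?thesis
      by (cases "k = 0") (auto dest: dvd_imp_le)
  qed
qed

lemma code_factorizations_nonempty:
  assumes "C \<subseteq> {2..}" "e \<in> balanced_msets C"
  shows "\<exists>Z. Z \<in> code_factorizations C e"
  using assms(2)
proof (induction "size e" arbitrary: e rule: less_induct)
  case less
  show ?case
  proof (cases "e = {#}")
    case True
    then show ?thesis by (intro exI[of _ "{#}"]) (simp add: code_factorizations_def)
  next
    case False
    then obtain c where c: "c \<in> codes C" "atom_mset c \<subseteq># e"
      using exists_atom_mset_subseteq less.prems by blast
    have "e - atom_mset c \<in> balanced_msets C"
      using balanced_msets_diff[OF atom_mset_balanced[OF c(1)] less.prems c(2)] .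
    moreover have "size (e - atom_mset c) < size e"
    proof -
      have "0 < size (atom_mset c)"
        using atom_mset_nonempty[OF assms(1) c(1)] by (simp add: nonempty_has_size)
      moreover have "size (atom_mset c) \<le> size e"
        using c(2) by (rule size_mset_mono)
      ultimately show ?thesis
        using c(2) by (simp add: size_Diff_submset)
    qed
    ultimately obtain Z where "Z \<in> code_factorizations C (e - atom_mset c)"
      using less.hyps by blast
    then have "add_mset c Z \<in> code_factorizations C e"
      using c by (auto simp: code_factorizations_def subset_mset.add_diff_inverse)
    then show ?thesis ..
  qed
qed

definition code_atom :: "code \<Rightarrow> nat" where
  "code_atom c = nat_of_mset (atom_mset c)"

text \<open>Factorizations in Zs are multisets of associate classes; here these are singletons.\<close>

definition code_class :: "code \<Rightarrow> nat set" where
  "code_class c = {code_atom c}"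

lemma mset_of_nat_code_atom [simp]: "mset_of_nat (code_atom c) = atom_mset c"
  by (simp add: code_atom_def)

lemma code_atom_in_carrier: "c \<in> codes C \<Longrightarrow> code_atom c \<in> carrier (balanced_monoid C)"
  by (simp add: code_atom_def atom_mset_balanced)

lemma irreducible_balanced_monoid_iff_code_atom:
  assumes "C \<subseteq> {2..}" "a \<in> carrier (balanced_monoid C)"
  shows "irreducible (balanced_monoid C) a \<longleftrightarrow> a \<in> code_atom ` codes C"
proof -
  have m: "mset_of_nat a \<in> balanced_msets C" "a = nat_of_mset (mset_of_nat a)"
    using assms(2) by (simp_all add: carrier_balanced_monoid_iff)
  have "irreducible (balanced_monoid C) a \<longleftrightarrow> (\<exists>c\<in>codes C. mset_of_nat a = atom_mset c)"
  proof
    assume "irreducible (balanced_monoid C) a"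
    then have min: "mset_of_nat a \<noteq> {#}" "\<forall>m\<in>balanced_msets C. m \<subset># mset_of_nat a \<longrightarrow> m = {#}"
      using irreducible_balanced_monoid_iff[OF assms(2)] by auto
    then obtain c where c: "c \<in> codes C" "atom_mset c \<subseteq># mset_of_nat a"
      using exists_atom_mset_subseteq m(1) by blast
    then have "mset_of_nat a = atom_mset c"
      using min(2) atom_mset_balanced atom_mset_nonempty[OF assms(1)]
      by (metis subset_mset.le_imp_less_or_eq)
    with c(1) show "\<exists>c\<in>codes C. mset_of_nat a = atom_mset c" ..
  next
    assume "\<exists>c\<in>codes C. mset_of_nat a = atom_mset c"
    then show "irreducible (balanced_monoid C) a"
      unfolding irreducible_balanced_monoid_iff[OF assms(2)]
      using atom_mset_nonempty[OF assms(1)] atom_mset_minimal[OF assms(1)]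
      by (force simp: subset_mset.less_le)
  qed
  also have "\<dots> \<longleftrightarrow> a \<in> code_atom ` codes C"
    using m(2) by (auto simp: code_atom_def)
  finally show ?thesis .
qed

lemma atoms_balanced_monoid: "C \<subseteq> {2..} \<Longrightarrow> atoms (balanced_monoid C) = code_atom ` codes C"
  unfolding atoms_def using irreducible_balanced_monoid_iff_code_atom code_atom_in_carrier by blast

lemma foldr_code_atoms:
  "foldr (\<otimes>\<^bsub>balanced_monoid C\<^esub>) (map code_atom cs) \<one>\<^bsub>balanced_monoid C\<^esub> = nat_of_mset (eval_codes (mset cs))"
  by (induction cs) (simp_all add: balanced_monoid_def code_atom_def)

lemma Zs_balanced_monoid:
  assumes "C \<subseteq> {2..}" "a \<in> carrier (balanced_monoid C)"
  shows "Zs (balanced_monoid C) a = image_mset code_class ` code_factorizations C (mset_of_nat a)"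
proof -
  have fmset: "fmset (balanced_monoid C) (map code_atom cs) = image_mset code_class (mset cs)"
    if "set cs \<subseteq> codes C" for cs
    using that by (induction cs) (auto simp: fmset_def code_class_def assocs_balanced_monoid code_atom_in_carrier)
  have wfactors: "wfactors (balanced_monoid C) (map code_atom cs) a \<longleftrightarrow> mset cs \<in> code_factorizations C (mset_of_nat a)"
    if "set cs \<subseteq> codes C" for cs
  proof -
    have "nat_of_mset (eval_codes (mset cs)) = a \<longleftrightarrow> eval_codes (mset cs) = mset_of_nat a"
      using assms(2) by (auto simp: carrier_balanced_monoid_iff)
    then show ?thesis
      using that assms eval_codes_balanced[of "mset cs" C]
      by (auto simp: wfactors_def code_factorizations_def foldr_code_atoms associated_balanced_monoid_iff
          irreducible_balanced_monoid_iff_code_atom code_atom_in_carrier)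
  qed
  have lists: "set fs \<subseteq> code_atom ` codes C \<longleftrightarrow> (\<exists>cs. set cs \<subseteq> codes C \<and> fs = map code_atom cs)" for fs
    using lists_image[of code_atom "codes C"] unfolding lists_eq_set by blast
  show ?thesis
  proof (intro equalityI subsetI)
    fix z assume "z \<in> Zs (balanced_monoid C) a"
    then obtain fs where fs: "z = fmset (balanced_monoid C) fs" "set fs \<subseteq> carrier (balanced_monoid C)"
      "wfactors (balanced_monoid C) fs a"
      unfolding Zs_def by blast
    then have "set fs \<subseteq> code_atom ` codes C"
      using irreducible_balanced_monoid_iff_code_atom[OF assms(1)] unfolding wfactors_def by blast
    then obtain cs where "set cs \<subseteq> codes C" "fs = map code_atom cs"
      using lists by blast
    with fs show "z \<in> image_mset code_class ` code_factorizations C (mset_of_nat a)"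
      using fmset wfactors by blast
  next
    fix z assume "z \<in> image_mset code_class ` code_factorizations C (mset_of_nat a)"
    then obtain cs where cs: "mset cs \<in> code_factorizations C (mset_of_nat a)" "z = image_mset code_class (mset cs)"
      by (metis ex_mset imageE)
    then have "set cs \<subseteq> codes C"
      by (simp add: code_factorizations_def)
    with cs show "z \<in> Zs (balanced_monoid C) a"
      unfolding Zs_def using fmset wfactors code_atom_in_carrier
      by (intro CollectI exI[of _ "map code_atom cs"]) auto
  qed
qed

lemma Ls_balanced_monoid:
  "C \<subseteq> {2..} \<Longrightarrow> a \<in> carrier (balanced_monoid C) \<Longrightarrow>
    Ls (balanced_monoid C) a = size ` code_factorizations C (mset_of_nat a)"
  by (simp add: Ls_def Zs_balanced_monoid image_image)

lemma inj_on_code_class: "C \<subseteq> {2..} \<Longrightarrow> inj_on code_class (codes C)"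
  using inj_on_atom_mset unfolding inj_on_def code_class_def code_atom_def
  by (metis mset_of_nat_of_mset singleton_inject)

lemma fdist_code_class:
  "C \<subseteq> {2..} \<Longrightarrow> Z \<in> code_factorizations C e \<Longrightarrow> Z' \<in> code_factorizations C e \<Longrightarrow>
    fdist (image_mset code_class Z) (image_mset code_class Z') = fdist Z Z'"
  by (rule fdist_image_mset_inj[OF inj_on_code_class]) (auto simp: code_factorizations_def)

lemma is_chain_balanced_monoid_iff:
  assumes "C \<subseteq> {2..}" "a \<in> carrier (balanced_monoid C)"
    and "Z \<in> code_factorizations C (mset_of_nat a)" "Z' \<in> code_factorizations C (mset_of_nat a)"
  shows "is_chain (balanced_monoid C) a N (image_mset code_class Z) (image_mset code_class Z') \<longleftrightarrow>
    chain_in (code_factorizations C (mset_of_nat a)) N Z Z'"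
  unfolding is_chain_eq_chain_in Zs_balanced_monoid[OF assms(1,2)]
  by (rule chain_in_image_mset_iff[OF inj_on_code_class[OF assms(1)] _ assms(3,4)])
    (simp add: code_factorizations_def)

lemma finitely_generated_balanced_monoid:
  assumes "finite C" "C \<subseteq> {2..}"
  shows "finitely_generated (balanced_monoid C)"
  unfolding finitely_generated_def
proof (intro exI[of _ "code_atom ` codes C"] conjI ballI)
  show "finite (code_atom ` codes C)"
    using assms(1) by (simp add: finite_codes)
  show "code_atom ` codes C \<subseteq> carrier (balanced_monoid C)"
    using code_atom_in_carrier by blast
  fix a assume a: "a \<in> carrier (balanced_monoid C)"
  then obtain Z where Z: "Z \<in> code_factorizations C (mset_of_nat a)"
    using code_factorizations_nonempty[OF assms(2)] by (auto simp: carrier_balanced_monoid_iff)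
  obtain cs where cs: "mset cs = Z"
    using ex_mset by blast
  have "a = foldr (\<otimes>\<^bsub>balanced_monoid C\<^esub>) (map code_atom cs) \<one>\<^bsub>balanced_monoid C\<^esub>"
    using a Z cs by (simp add: foldr_code_atoms code_factorizations_def carrier_balanced_monoid_iff)
  moreover have "set (map code_atom cs) \<subseteq> code_atom ` codes C"
    using Z cs by (auto simp: code_factorizations_def)
  ultimately show "\<exists>es. set es \<subseteq> code_atom ` codes C \<and>
      a = foldr (\<otimes>\<^bsub>balanced_monoid C\<^esub>) es \<one>\<^bsub>balanced_monoid C\<^esub>"
    by blast
qed

section \<open>Comparing factorizations block by block\<close>

definition block :: "nat \<Rightarrow> code multiset \<Rightarrow> nat \<times> nat \<times> nat" where
  "block d Z = (count Z (X d), count Z (Y d), count Z (W d))"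

lemma code_multiset_eq_iff_blocks: "Z = Z' \<longleftrightarrow> (\<forall>d. block d Z = block d Z')"
proof
  assume "\<forall>d. block d Z = block d Z'"
  then have "count Z c = count Z' c" for c
    by (cases c) (auto simp: block_def)
  then show "Z = Z'" by (rule multiset_eqI)
qed simp

lemma block_not_in_codes:
  "set_mset Z \<subseteq> codes C \<Longrightarrow> d \<notin> C \<Longrightarrow> block d Z = (0, 0, 0)"
  by (auto simp: block_def codes_def count_eq_zero_iff)

lemma block_ne_imp_mem:
  "set_mset Z \<subseteq> codes C \<Longrightarrow> set_mset Z' \<subseteq> codes C \<Longrightarrow> block d Z \<noteq> block d Z' \<Longrightarrow>
    d \<in> C"
  by (metis block_not_in_codes)

lemma eval_codes_replicate_W:
  "eval_codes (replicate_mset n (W d)) = replicate_mset n (2 * d) + replicate_mset n (2 * d + 1)"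
  by (induction n) auto

text \<open>Both factorizations contain equally many p_d and q_d, which forces their d-blocks to differ
  by a multiple of the relation X_d Y_d = W_d^d.\<close>

lemma block_ne_exchange:
  assumes "eval_codes Z = eval_codes Z'" "0 < d" "block d Z \<noteq> block d Z'"
  obtains A B where "A \<subseteq># Z - Z'" "B \<subseteq># Z' - Z"
    "{A, B} = {{#X d, Y d#}, replicate_mset d (W d)}"
proof -
  define x y w x' y' w' where xyw_defs: "x = int (count Z (X d))" "y = int (count Z (Y d))"
    "w = int (count Z (W d))" "x' = int (count Z' (X d))" "y' = int (count Z' (Y d))"
    "w' = int (count Z' (W d))"
  have "d * count Z (X d) + count Z (W d) = d * count Z' (X d) + count Z' (W d)"
    "d * count Z (Y d) + count Z (W d) = d * count Z' (Y d) + count Z' (W d)"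
    using assms(1) by (metis count_eval_codes_even count_eval_codes_odd)+
  then have wx: "w' - w = int d * (x - x')" and "w' - w = int d * (y - y')"
    unfolding xyw_defs by (simp_all add: algebra_simps flip: of_nat_mult of_nat_add)
  then have "y - y' = x - x'"
    using assms(2) by simp
  note t = this wx
  have "x \<noteq> x'"
    using t assms(3) by (auto simp: block_def xyw_defs)
  then consider "1 \<le> x - x'" | "x - x' \<le> -1" by linarith
  then show thesis
  proof cases
    case 1
    then have "int d \<le> w' - w"
      using t(2) assms(2) by (simp add: mult_le_cancel_left1)
    then have "{#X d, Y d#} \<subseteq># Z - Z'" "replicate_mset d (W d) \<subseteq># Z' - Z"
      using 1 t(1) by (auto simp: subseteq_mset_def xyw_defs simp flip: count_le_replicate_mset_subset_eq)
    then show thesis using that by blast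
  next
    case 2
    have "w - w' = int d * (x' - x)"
      using t(2) by (simp add: algebra_simps)
    with 2 assms(2) have "int d \<le> w - w'"
      by (simp add: mult_le_cancel_left1)
    then have "replicate_mset d (W d) \<subseteq># Z - Z'" "{#X d, Y d#} \<subseteq># Z' - Z"
      using 2 t(1) by (auto simp: subseteq_mset_def xyw_defs simp flip: count_le_replicate_mset_subset_eq)
    then show thesis using that by blast
  qed
qed

lemma fdist_ge_of_block_ne:
  assumes "eval_codes Z = eval_codes Z'" "0 < d" "block d Z \<noteq> block d Z'"
  shows "d \<le> fdist Z Z'"
proof -
  obtain A B where "A \<subseteq># Z - Z'" "B \<subseteq># Z' - Z" "{A, B} = {{#X d, Y d#}, replicate_mset d (W d)}"
    using block_ne_exchange[OF assms] .
  then have "replicate_mset d (W d) \<subseteq># Z - Z' \<or> replicate_mset d (W d) \<subseteq># Z' - Z"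
    by (auto simp: doubleton_eq_iff)
  then show ?thesis
    unfolding fdist_def by (metis le_max_iff_disj size_mset_mono size_replicate_mset)
qed

lemma chain_in_code_factorizations_lower_bound:
  assumes "chain_in (code_factorizations C e) N Z Z'" "0 < d" "block d Z \<noteq> block d Z'"
  shows "d \<le> N"
  using assms(1,3) by (rule chain_in_lower_bound) (auto simp: code_factorizations_def fdist_ge_of_block_ne[OF _ assms(2)])

lemma code_factorizations_exchange:
  assumes "Z \<in> code_factorizations C e" "A \<subseteq># Z" "set_mset B \<subseteq> codes C" "eval_codes A = eval_codes B"
  shows "Z - A + B \<in> code_factorizations C e"
proof -
  have "eval_codes (Z - A + B) = eval_codes (Z - A + A)"
    using assms(4) by simp
  also have "\<dots> = eval_codes Z"
    using assms(2) by (simp add: subset_mset.diff_add)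
  finally show ?thesis
    using assms(1,3) by (auto simp: code_factorizations_def dest: in_diffD)
qed

lemma chain_in_code_factorizations:
  assumes "C \<subseteq> {2..}" "Z \<in> code_factorizations C e" "Z' \<in> code_factorizations C e"
    and "\<And>d. block d Z \<noteq> block d Z' \<Longrightarrow> d \<le> N"
  shows "chain_in (code_factorizations C e) N Z Z'"
  using assms(2,4)
proof (induction "size (Z - Z')" arbitrary: Z rule: less_induct)
  case less
  show ?case
  proof (cases "Z = Z'")
    case True
    then show ?thesis using less.prems(1) by (simp add: chain_in_refl)
  next
    case False
    then obtain d where d: "block d Z \<noteq> block d Z'"
      by (meson code_multiset_eq_iff_blocks)
    have "d \<in> C"
      using block_ne_imp_mem d less.prems(1) assms(3) unfolding code_factorizations_def by blast
    then have "2 \<le> d" "0 < d" using assms(1) by auto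
    have "eval_codes Z = eval_codes Z'"
      using less.prems(1) assms(3) by (simp add: code_factorizations_def)
    then obtain A B where AB: "A \<subseteq># Z - Z'" "B \<subseteq># Z' - Z"
      "{A, B} = {{#X d, Y d#}, replicate_mset d (W d)}"
      using block_ne_exchange \<open>0 < d\<close> d by blast
    define Z1 where "Z1 = Z - A + B"
    have "Z1 \<in> code_factorizations C e"
      unfolding Z1_def
    proof (rule code_factorizations_exchange[OF less.prems(1)])
      show "A \<subseteq># Z" using AB(1) by (meson diff_subset_eq_self subset_mset.order_trans)
      show "set_mset B \<subseteq> codes C"
        using AB(2) assms(3) by (auto simp: code_factorizations_def dest!: mset_subset_eqD in_diffD)
      show "eval_codes A = eval_codes B"
        using AB(3) by (auto simp: doubleton_eq_iff eval_codes_replicate_W)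
    qed
    moreover have "fdist Z Z1 \<le> N"
    proof -
      have "size A \<le> d" "size B \<le> d"
        using AB(3) \<open>2 \<le> d\<close> by (auto simp: doubleton_eq_iff)
      then show ?thesis
        using fdist_exchange_le[of Z A B] less.prems(2)[OF d] unfolding Z1_def by linarith
    qed
    moreover have "chain_in (code_factorizations C e) N Z1 Z'"
    proof (rule less.hyps)
      have "A \<noteq> {#}" using AB(3) \<open>2 \<le> d\<close> by (auto simp: doubleton_eq_iff)
      moreover have "size A \<le> size (Z - Z')" using AB(1) by (rule size_mset_mono)
      ultimately show "size (Z1 - Z') < size (Z - Z')"
        unfolding Z1_def exchange_diff[OF AB(1,2)] size_Diff_submset[OF AB(1)]
        by (simp add: nonempty_has_size)
      show "Z1 \<in> code_factorizations C e" by fact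
      show "d' \<le> N" if "block d' Z1 \<noteq> block d' Z'" for d'
      proof (cases "d' = d")
        case False
        then have "block d' Z1 = block d' Z"
          using AB(3) by (auto simp: Z1_def block_def doubleton_eq_iff)
        then show ?thesis using less.prems(2) that by simp
      qed (use less.prems(2)[OF d] in simp)
    qed
    ultimately show ?thesis
      using less.prems(1) by (blast intro: chain_in_Cons)
  qed
qed

lemma code_factorizations_XY:
  assumes "C \<subseteq> {2..}" "d \<in> C"
  shows "code_factorizations C (atom_mset (X d) + atom_mset (Y d)) = {{#X d, Y d#}, replicate_mset d (W d)}"
proof (intro equalityI subsetI)
  fix Z assume Z: "Z \<in> code_factorizations C (atom_mset (X d) + atom_mset (Y d))"
  have even: "d' * count Z (X d') + count Z (W d') = (if d' = d then d else 0)"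
    and odd: "d' * count Z (Y d') + count Z (W d') = (if d' = d then d else 0)" for d'
    using Z by (auto simp: code_factorizations_def simp flip: count_eval_codes_even count_eval_codes_odd)
  have other: "block d' Z = (0, 0, 0)" if "d' \<noteq> d" for d'
  proof (cases "d' \<in> C")
    case True
    then have "0 < d'" using assms(1) by auto
    then show ?thesis using even[of d'] odd[of d'] that by (simp add: block_def)
  qed (use Z block_not_in_codes in \<open>auto simp: code_factorizations_def\<close>)
  have "0 < d" using assms by auto
  then consider "block d Z = (1, 1, 0)" | "block d Z = (0, 0, d)"
    using even[of d] odd[of d] unfolding block_def
    by (cases "count Z (X d)"; cases "count Z (Y d)") auto
  then show "Z \<in> {{#X d, Y d#}, replicate_mset d (W d)}"
    using other \<open>0 < d\<close> by cases (auto simp: code_multiset_eq_iff_blocks block_def)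
next
  fix Z assume "Z \<in> {{#X d, Y d#}, replicate_mset d (W d)}"
  then show "Z \<in> code_factorizations C (atom_mset (X d) + atom_mset (Y d))"
    using assms(2) by (auto simp: code_factorizations_def codes_def eval_codes_replicate_W split: if_splits)
qed

section \<open>Catenary degrees, the set R and daleth*\<close>

definition differing_blocks :: "code multiset set \<Rightarrow> nat set" where
  "differing_blocks F = {d. \<exists>Z\<in>F. \<exists>Z'\<in>F. block d Z \<noteq> block d Z'}"

lemma differing_blocks_subset: "differing_blocks (code_factorizations C e) \<subseteq> C"
proof
  fix d assume "d \<in> differing_blocks (code_factorizations C e)"
  then obtain Z Z' where "Z \<in> code_factorizations C e" "Z' \<in> code_factorizations C e" "block d Z \<noteq> block d Z'"
    unfolding differing_blocks_def by blast
  then show "d \<in> C"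
    using block_ne_imp_mem unfolding code_factorizations_def by blast
qed

lemma differing_blocks_nonempty: "Z \<in> F \<Longrightarrow> Z' \<in> F \<Longrightarrow> Z \<noteq> Z' \<Longrightarrow> differing_blocks F \<noteq> {}"
  unfolding differing_blocks_def code_multiset_eq_iff_blocks by blast

lemma all_chained_balanced_monoid_iff:
  assumes "C \<subseteq> {2..}" "a \<in> carrier (balanced_monoid C)"
  shows "all_chained (balanced_monoid C) a N \<longleftrightarrow> (\<forall>d\<in>differing_blocks (code_factorizations C (mset_of_nat a)). d \<le> N)"
    (is "_ \<longleftrightarrow> (\<forall>d\<in>differing_blocks ?F. d \<le> N)")
proof -
  have "all_chained (balanced_monoid C) a N \<longleftrightarrow> (\<forall>Z\<in>?F. \<forall>Z'\<in>?F. chain_in ?F N Z Z')"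
    unfolding all_chained_def Zs_balanced_monoid[OF assms]
    by (simp add: is_chain_balanced_monoid_iff[OF assms])
  also have "\<dots> \<longleftrightarrow> (\<forall>d\<in>differing_blocks ?F. d \<le> N)"
  proof
    assume all: "\<forall>Z\<in>?F. \<forall>Z'\<in>?F. chain_in ?F N Z Z'"
    show "\<forall>d\<in>differing_blocks ?F. d \<le> N"
    proof
      fix d assume d: "d \<in> differing_blocks ?F"
      then obtain Z Z' where "Z \<in> ?F" "Z' \<in> ?F" "block d Z \<noteq> block d Z'"
        unfolding differing_blocks_def by blast
      moreover have "0 < d"
        using d differing_blocks_subset assms(1) by fastforce
      ultimately show "d \<le> N"
        using chain_in_code_factorizations_lower_bound all by blast
    qed
  next
    assume "\<forall>d\<in>differing_blocks ?F. d \<le> N"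
    then show "\<forall>Z\<in>?F. \<forall>Z'\<in>?F. chain_in ?F N Z Z'"
      unfolding differing_blocks_def by (blast intro: chain_in_code_factorizations[OF assms(1)])
  qed
  finally show ?thesis .
qed

lemma is_catenary_degree_eq_Max:
  assumes "\<And>N. all_chained G a N \<longleftrightarrow> (\<forall>d\<in>D. d \<le> N)" "finite D" "D \<noteq> {}"
  shows "is_catenary_degree G a N \<longleftrightarrow> N = Max D"
  unfolding is_catenary_degree_def assms(1) Max_le_iff[OF assms(2,3), symmetric]
  by (metis le_antisym not_le order_refl)

definition product_XY :: "nat \<Rightarrow> nat" where
  "product_XY d = nat_of_mset (atom_mset (X d) + atom_mset (Y d))"

lemma product_XY_in_carrier: "d \<in> C \<Longrightarrow> product_XY d \<in> carrier (balanced_monoid C)"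
  unfolding product_XY_def nat_of_mset_in_carrier
  by (intro balanced_msets_add atom_mset_balanced) (simp_all add: codes_def)

lemma product_XY_eq_mult: "product_XY d = code_atom (X d) \<otimes>\<^bsub>balanced_monoid C\<^esub> code_atom (Y d)"
  by (simp add: product_XY_def code_atom_def balanced_monoid_def)

lemma code_factorizations_product_XY:
  "C \<subseteq> {2..} \<Longrightarrow> d \<in> C \<Longrightarrow>
    code_factorizations C (mset_of_nat (product_XY d)) = {{#X d, Y d#}, replicate_mset d (W d)}"
  unfolding product_XY_def mset_of_nat_of_mset by (rule code_factorizations_XY)

lemma differing_blocks_XY: "0 < d \<Longrightarrow> differing_blocks {{#X d, Y d#}, replicate_mset d (W d)} = {d}"
proof -
  assume "0 < d"
  then have "block d {#X d, Y d#} \<noteq> block d (replicate_mset d (W d))"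
    by (simp add: block_def)
  moreover have "block d' {#X d, Y d#} = block d' (replicate_mset d (W d))" if "d' \<noteq> d" for d'
    using that by (simp add: block_def)
  ultimately show ?thesis
    unfolding differing_blocks_def by fastforce
qed

lemma fdist_XY_replicate_W: "2 \<le> d \<Longrightarrow> fdist {#X d, Y d#} (replicate_mset d (W d)) = d"
proof -
  have "{#X d, Y d#} - replicate_mset d (W d) = {#X d, Y d#}"
    "replicate_mset d (W d) - {#X d, Y d#} = replicate_mset d (W d)"
    by (rule multiset_eqI, simp)+
  then show "2 \<le> d \<Longrightarrow> ?thesis" by (simp add: fdist_def)
qed

lemma Ls_product_XY: "C \<subseteq> {2..} \<Longrightarrow> d \<in> C \<Longrightarrow> Ls (balanced_monoid C) (product_XY d) = {2, d}"
  by (simp add: Ls_balanced_monoid product_XY_in_carrier code_factorizations_product_XY numeral_2_eq_2)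

lemma Zs_product_XY:
  "C \<subseteq> {2..} \<Longrightarrow> d \<in> C \<Longrightarrow> Zs (balanced_monoid C) (product_XY d) =
    {image_mset code_class {#X d, Y d#}, image_mset code_class (replicate_mset d (W d))}"
  by (simp add: Zs_balanced_monoid product_XY_in_carrier code_factorizations_product_XY)

lemma fdist_product_XY_factorizations:
  assumes "C \<subseteq> {2..}" "d \<in> C"
  shows "fdist (image_mset code_class {#X d, Y d#}) (image_mset code_class (replicate_mset d (W d))) = d"
proof -
  have "{#X d, Y d#} \<in> code_factorizations C (mset_of_nat (product_XY d))"
    "replicate_mset d (W d) \<in> code_factorizations C (mset_of_nat (product_XY d))"
    using code_factorizations_product_XY[OF assms] by simp_all
  then have "fdist (image_mset code_class {#X d, Y d#}) (image_mset code_class (replicate_mset d (W d))) =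
      fdist {#X d, Y d#} (replicate_mset d (W d))"
    by (rule fdist_code_class[OF assms(1)])
  also have "\<dots> = d"
    using assms by (intro fdist_XY_replicate_W) auto
  finally show ?thesis .
qed

lemma Ca_balanced_monoid:
  assumes "finite C" "C \<subseteq> {2..}"
  shows "Ca (balanced_monoid C) = C"
proof (intro equalityI subsetI)
  fix N assume "N \<in> Ca (balanced_monoid C)"
  then obtain a z z' where a: "a \<in> carrier (balanced_monoid C)"
    and z: "z \<in> Zs (balanced_monoid C) a" "z' \<in> Zs (balanced_monoid C) a" "z \<noteq> z'"
    and N: "is_catenary_degree (balanced_monoid C) a N"
    unfolding Ca_def by blast
  define D where "D = differing_blocks (code_factorizations C (mset_of_nat a))"
  have "D \<subseteq> C" unfolding D_def by (rule differing_blocks_subset)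
  moreover have "D \<noteq> {}"
    using z differing_blocks_nonempty unfolding D_def Zs_balanced_monoid[OF assms(2) a] by blast
  moreover have "finite D"
    using \<open>D \<subseteq> C\<close> assms(1) by (rule finite_subset)
  ultimately have "N = Max D" "Max D \<in> D"
    using N is_catenary_degree_eq_Max[OF all_chained_balanced_monoid_iff[OF assms(2) a, folded D_def]]
    by auto
  with \<open>D \<subseteq> C\<close> show "N \<in> C" by auto
next
  fix d assume d: "d \<in> C"
  then have "2 \<le> d" using assms(2) by auto
  define F where "F = code_factorizations C (mset_of_nat (product_XY d))"
  have F: "F = {{#X d, Y d#}, replicate_mset d (W d)}"
    unfolding F_def using assms(2) d by (rule code_factorizations_product_XY)
  have "is_catenary_degree (balanced_monoid C) (product_XY d) d"
    using is_catenary_degree_eq_Max[OF all_chained_balanced_monoid_iff[OF assms(2) product_XY_in_carrier[OF d]]]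
      differing_blocks_XY \<open>2 \<le> d\<close> by (simp add: F_def[symmetric] F)
  moreover have "image_mset code_class {#X d, Y d#} \<noteq> image_mset code_class (replicate_mset d (W d))"
    using fdist_product_XY_factorizations[OF assms(2) d] \<open>2 \<le> d\<close> by auto
  ultimately show "d \<in> Ca (balanced_monoid C)"
    unfolding Ca_def using product_XY_in_carrier[OF d] Zs_product_XY[OF assms(2) d] by blast
qed

lemma Rset_balanced_monoid:
  assumes "C \<subseteq> {2..}"
  shows "Rset (balanced_monoid C) = C"
proof (intro equalityI subsetI)
  fix d assume "d \<in> Rset (balanced_monoid C)"
  then obtain a z z' where d: "2 \<le> d" and a: "a \<in> carrier (balanced_monoid C)"
    and z: "z \<in> Zs (balanced_monoid C) a" "z' \<in> Zs (balanced_monoid C) a"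
    and dist: "fdist z z' = d" and no_chain: "\<not> is_chain (balanced_monoid C) a (d - 1) z z'"
    unfolding Rset_def by blast
  define F where "F = code_factorizations C (mset_of_nat a)"
  obtain Z Z' where ZZ': "Z \<in> F" "Z' \<in> F" "z = image_mset code_class Z" "z' = image_mset code_class Z'"
    using z unfolding F_def Zs_balanced_monoid[OF assms a] by blast
  have "fdist Z Z' = d"
    using dist ZZ' fdist_code_class[OF assms] unfolding F_def by simp
  show "d \<in> C"
  proof (rule ccontr)
    assume "d \<notin> C"
    have "d' \<le> d - 1" if "block d' Z \<noteq> block d' Z'" for d'
    proof -
      have "d' \<in> differing_blocks F"
        unfolding differing_blocks_def using that ZZ'(1,2) by blast
      then have "d' \<in> C"
        using differing_blocks_subset unfolding F_def by blast
      then have "d' \<noteq> d" "0 < d'" using \<open>d \<notin> C\<close> assms by auto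
      have "eval_codes Z = eval_codes Z'"
        using ZZ'(1,2) by (simp add: F_def code_factorizations_def)
      then have "d' \<le> fdist Z Z'"
        using \<open>0 < d'\<close> that by (rule fdist_ge_of_block_ne)
      with \<open>d' \<noteq> d\<close> show ?thesis using \<open>fdist Z Z' = d\<close> by simp
    qed
    then have "chain_in F (d - 1) Z Z'"
      using ZZ'(1,2) unfolding F_def by (intro chain_in_code_factorizations[OF assms])
    then show False
      using no_chain is_chain_balanced_monoid_iff[OF assms a] ZZ' unfolding F_def by blast
  qed
next
  fix d assume d: "d \<in> C"
  then have "2 \<le> d" using assms by auto
  define F where "F = code_factorizations C (mset_of_nat (product_XY d))"
  have F: "F = {{#X d, Y d#}, replicate_mset d (W d)}"
    unfolding F_def using assms d by (rule code_factorizations_product_XY)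
  have "\<not> chain_in F (d - 1) {#X d, Y d#} (replicate_mset d (W d))"
  proof
    assume "chain_in F (d - 1) {#X d, Y d#} (replicate_mset d (W d))"
    moreover have "block d {#X d, Y d#} \<noteq> block d (replicate_mset d (W d))"
      by (simp add: block_def)
    ultimately have "d \<le> d - 1"
      using \<open>2 \<le> d\<close> unfolding F_def by (intro chain_in_code_factorizations_lower_bound) auto
    then show False using \<open>2 \<le> d\<close> by simp
  qed
  then have "\<not> is_chain (balanced_monoid C) (product_XY d) (d - 1)
      (image_mset code_class {#X d, Y d#}) (image_mset code_class (replicate_mset d (W d)))"
    using is_chain_balanced_monoid_iff[OF assms product_XY_in_carrier[OF d]] F unfolding F_def by blast
  moreover have "fdist (image_mset code_class {#X d, Y d#}) (image_mset code_class (replicate_mset d (W d))) = d"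
    using assms d by (rule fdist_product_XY_factorizations)
  moreover have "image_mset code_class {#X d, Y d#} \<noteq> image_mset code_class (replicate_mset d (W d))"
    using calculation(2) \<open>2 \<le> d\<close> by auto
  ultimately show "d \<in> Rset (balanced_monoid C)"
    unfolding Rset_def using product_XY_in_carrier[OF d] Zs_product_XY[OF assms d] \<open>2 \<le> d\<close> by blast
qed

lemma daleth_star_balanced_monoid:
  assumes "C \<subseteq> {2..}"
  shows "daleth_star (balanced_monoid C) = C - {2}"
proof (intro equalityI subsetI)
  fix x assume "x \<in> daleth_star (balanced_monoid C)"
  then obtain u v where x: "x = Inf (Ls (balanced_monoid C) (u \<otimes>\<^bsub>balanced_monoid C\<^esub> v) - {2})"
    and uv: "u \<in> atoms (balanced_monoid C)" "v \<in> atoms (balanced_monoid C)"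
    and lengths: "\<exists>l\<in>Ls (balanced_monoid C) (u \<otimes>\<^bsub>balanced_monoid C\<^esub> v).
      \<exists>l'\<in>Ls (balanced_monoid C) (u \<otimes>\<^bsub>balanced_monoid C\<^esub> v). l \<noteq> l'"
    unfolding daleth_star_def by blast
  obtain c1 c2 where c: "c1 \<in> codes C" "c2 \<in> codes C" "u = code_atom c1" "v = code_atom c2"
    using uv atoms_balanced_monoid[OF assms] by auto
  define a where "a = u \<otimes>\<^bsub>balanced_monoid C\<^esub> v"
  define F where "F = code_factorizations C (mset_of_nat a)"
  have "mset_of_nat a = eval_codes {#c1, c2#}"
    by (simp add: a_def c)
  moreover have a: "a \<in> carrier (balanced_monoid C)"
    using c by (simp add: a_def balanced_monoid_def code_atom_def balanced_msets_add atom_mset_balanced)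
  ultimately have Z0: "{#c1, c2#} \<in> F"
    using c by (simp add: F_def code_factorizations_def)
  have Ls: "Ls (balanced_monoid C) a = size ` F"
    unfolding F_def using assms a by (rule Ls_balanced_monoid)
  obtain l where "l \<in> size ` F" "l \<noteq> 2"
    using lengths unfolding a_def[symmetric] Ls by metis
  then obtain Z where Z: "Z \<in> F" "size Z \<noteq> 2"
    by (auto simp: image_iff)
  then have "{#c1, c2#} \<noteq> Z"
    by auto
  then obtain d where d: "block d {#c1, c2#} \<noteq> block d Z"
    by (meson code_multiset_eq_iff_blocks)
  have "d \<in> differing_blocks F"
    unfolding differing_blocks_def using Z0 Z(1) d by blast
  then have "d \<in> C"
    using differing_blocks_subset unfolding F_def by blast
  then have "2 \<le> d" "0 < d"
    using assms by auto
  have "eval_codes {#c1, c2#} = eval_codes Z"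
    using Z0 Z(1) by (simp add: F_def code_factorizations_def)
  then obtain A B where A: "A \<subseteq># {#c1, c2#} - Z" and AB: "{A, B} = {{#X d, Y d#}, replicate_mset d (W d)}"
    using block_ne_exchange \<open>0 < d\<close> d by blast
  have "A = {#c1, c2#}"
  proof -
    have "A \<subseteq># {#c1, c2#}"
      using A by (meson diff_subset_eq_self subset_mset.order_trans)
    moreover have "2 \<le> size A"
      using AB \<open>2 \<le> d\<close> by (auto simp: doubleton_eq_iff)
    ultimately show ?thesis
      using mset_subset_size by (fastforce simp: subset_mset.le_less)
  qed
  then have "mset_of_nat a = eval_codes A"
    using \<open>mset_of_nat a = eval_codes {#c1, c2#}\<close> by simp
  also have "\<dots> = atom_mset (X d) + atom_mset (Y d)"
    using AB by (auto simp: doubleton_eq_iff eval_codes_replicate_W)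
  finally have "mset_of_nat a = atom_mset (X d) + atom_mset (Y d)" .
  then have "a = product_XY d"
    using a by (simp add: product_XY_def carrier_balanced_monoid_iff)
  then have "Ls (balanced_monoid C) a = {2, d}"
    using Ls_product_XY[OF assms \<open>d \<in> C\<close>] by simp
  moreover have "d \<noteq> 2"
    using Z calculation unfolding Ls by auto
  ultimately show "x \<in> C - {2}"
    using x \<open>d \<in> C\<close> by (simp add: a_def[symmetric])
next
  fix d assume d: "d \<in> C - {2}"
  have atoms: "code_atom (X d) \<in> atoms (balanced_monoid C)" "code_atom (Y d) \<in> atoms (balanced_monoid C)"
    using d atoms_balanced_monoid[OF assms] by (auto simp: codes_def)
  have L: "Ls (balanced_monoid C) (code_atom (X d) \<otimes>\<^bsub>balanced_monoid C\<^esub> code_atom (Y d)) = {2, d}"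
    using d Ls_product_XY[OF assms] by (simp flip: product_XY_eq_mult)
  show "d \<in> daleth_star (balanced_monoid C)"
    unfolding daleth_star_def
    by (intro CollectI exI[of _ "code_atom (X d)"] exI[of _ "code_atom (Y d)"] conjI)
      (use atoms L d in auto)
qed

section \<open>Divisor theory and class group\<close>

text \<open>Two ways of completing m to an element of H, adding only even resp. only odd primes; their
  greatest common divisor is m itself.\<close>

definition even_pad :: "nat set \<Rightarrow> nat multiset \<Rightarrow> nat multiset" where
  "even_pad C m = (\<Sum>d\<in>C. replicate_mset (nat ((- imbalance m d) mod int d)) (2 * d))"

definition odd_pad :: "nat set \<Rightarrow> nat multiset \<Rightarrow> nat multiset" where
  "odd_pad C m = (\<Sum>d\<in>C. replicate_mset (nat (imbalance m d mod int d)) (2 * d + 1))"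

lemma count_even_pad:
  "finite C \<Longrightarrow> d \<in> C \<Longrightarrow> count (even_pad C m) (2 * d) = nat ((- imbalance m d) mod int d)"
  "count (even_pad C m) (2 * d + 1) = 0"
  by (simp_all add: even_pad_def count_sum)

lemma count_odd_pad:
  "finite C \<Longrightarrow> d \<in> C \<Longrightarrow> count (odd_pad C m) (2 * d + 1) = nat (imbalance m d mod int d)"
  "count (odd_pad C m) (2 * d) = 0"
  by (simp_all add: odd_pad_def count_sum)

lemma set_mset_pads: "set_mset (even_pad C m) \<subseteq> prime_set C" "set_mset (odd_pad C m) \<subseteq> prime_set C"
  by (cases "finite C"; auto simp: even_pad_def odd_pad_def prime_set_def set_mset_sum split: if_splits)+

lemma imbalance_even_pad:
  "finite C \<Longrightarrow> d \<in> C \<Longrightarrow> 0 < d \<Longrightarrow> imbalance (even_pad C m) d = (- imbalance m d) mod int d"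
  unfolding imbalance_def count_even_pad by simp

lemma imbalance_odd_pad:
  "finite C \<Longrightarrow> d \<in> C \<Longrightarrow> 0 < d \<Longrightarrow> imbalance (odd_pad C m) d = - (imbalance m d mod int d)"
  unfolding imbalance_def count_odd_pad by simp

lemma padded_balanced:
  assumes "finite C" "C \<subseteq> {2..}" "set_mset m \<subseteq> prime_set C"
  shows "m + even_pad C m \<in> balanced_msets C" "m + odd_pad C m \<in> balanced_msets C"
proof -
  have "int d dvd imbalance m d + (- imbalance m d) mod int d" for d
    by (metis add.right_inverse dvd_eq_mod_eq_0 mod_0 mod_add_right_eq)
  moreover have "int d dvd imbalance m d - imbalance m d mod int d" for d
    by (simp add: minus_mod_eq_mult_div)
  moreover have "0 < d" if "d \<in> C" for d using that assms(2) by auto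
  ultimately show "m + even_pad C m \<in> balanced_msets C" "m + odd_pad C m \<in> balanced_msets C"
    using assms set_mset_pads
    by (auto simp: balanced_msets_def imbalance_even_pad imbalance_odd_pad)
qed

lemma divisor_theory_balanced_monoid:
  assumes "finite C" "C \<subseteq> {2..}"
  shows "divisor_theory (balanced_monoid C) (prime_set C) mset_of_nat"
  unfolding divisor_theory_def
proof (intro conjI ballI allI impI)
  fix a assume "a \<in> carrier (balanced_monoid C)"
  then show "set_mset (mset_of_nat a) \<subseteq> prime_set C"
    by (simp add: carrier_balanced_monoid_iff balanced_msets_def)
next
  fix m :: "nat multiset" assume m: "set_mset m \<subseteq> prime_set C"
  define A where "A = {nat_of_mset (m + even_pad C m), nat_of_mset (m + odd_pad C m)}"
  have "A \<subseteq> carrier (balanced_monoid C)"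
    using padded_balanced[OF assms m] by (simp add: A_def)
  moreover have "m' \<subseteq># m" if "\<forall>a\<in>A. m' \<subseteq># mset_of_nat a" for m'
  proof -
    have "count m' x \<le> count m x" for x
    proof -
      have "count m' x \<le> count m x + count (even_pad C m) x"
        "count m' x \<le> count m x + count (odd_pad C m) x"
        using that by (auto simp: A_def subseteq_mset_def)
      moreover have "x = 2 * (x div 2) \<or> x = 2 * (x div 2) + 1" by presburger
      ultimately show ?thesis
        by (metis add.right_neutral count_even_pad(2) count_odd_pad(2))
    qed
    then show ?thesis by (simp add: subseteq_mset_def)
  qed
  ultimately show "\<exists>A. finite A \<and> A \<noteq> {} \<and> A \<subseteq> carrier (balanced_monoid C) \<and>
      (\<forall>a\<in>A. m \<subseteq># mset_of_nat a) \<and> (\<forall>m'. (\<forall>a\<in>A. m' \<subseteq># mset_of_nat a) \<longrightarrow> m' \<subseteq># m)"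
    by (intro exI[of _ A]) (auto simp: A_def)
qed (simp_all add: divides_balanced_monoid_iff)

text \<open>A pair (x, y) stands for x - y in the quotient group of F(P); its class is determined by
  the imbalances modulo each d.\<close>

definition class_invariant :: "nat set \<Rightarrow> nat multiset \<times> nat multiset \<Rightarrow> nat \<Rightarrow> int" where
  "class_invariant C q = (\<lambda>d\<in>C. (imbalance (fst q) d - imbalance (snd q) d) mod int d)"

lemma class_rel_balanced_monoid_iff:
  assumes "finite C" "C \<subseteq> {2..}"
    and "q \<in> {(x, y). set_mset x \<subseteq> prime_set C \<and> set_mset y \<subseteq> prime_set C}"
  shows "(q, q') \<in> class_rel (balanced_monoid C) (prime_set C) mset_of_nat \<longleftrightarrow>
    q' \<in> {(x, y). set_mset x \<subseteq> prime_set C \<and> set_mset y \<subseteq> prime_set C} \<and>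
    class_invariant C q' = class_invariant C q"
proof -
  obtain x y x' y' where q: "q = (x, y)" "q' = (x', y')"
    and primes_xy: "set_mset x \<subseteq> prime_set C" "set_mset y \<subseteq> prime_set C"
    using assms(3) by (cases q; cases q') auto
  have balanced_dvd: "int d dvd imbalance (mset_of_nat a) d"
    if "a \<in> carrier (balanced_monoid C)" "d \<in> C" for a d
    using that by (auto simp: carrier_balanced_monoid_iff balanced_msets_def)
  have "((x, y), (x', y')) \<in> class_rel (balanced_monoid C) (prime_set C) mset_of_nat \<longleftrightarrow>
      set_mset x' \<subseteq> prime_set C \<and> set_mset y' \<subseteq> prime_set C \<and>
      (\<forall>d\<in>C. int d dvd (imbalance x d - imbalance y d) - (imbalance x' d - imbalance y' d))"
  proof (intro iffI conjI ballI; (elim conjE)?)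
    assume rel: "((x, y), (x', y')) \<in> class_rel (balanced_monoid C) (prime_set C) mset_of_nat"
    then show "set_mset x' \<subseteq> prime_set C" "set_mset y' \<subseteq> prime_set C"
      by (simp_all add: class_rel_def)
    fix d assume "d \<in> C"
    obtain a b where ab: "a \<in> carrier (balanced_monoid C)" "b \<in> carrier (balanced_monoid C)"
      "x + y' + mset_of_nat b = x' + y + mset_of_nat a"
      using rel by (auto simp: class_rel_def)
    have "imbalance (x + y' + mset_of_nat b) d = imbalance (x' + y + mset_of_nat a) d"
      using ab(3) by simp
    then have "(imbalance x d - imbalance y d) - (imbalance x' d - imbalance y' d) =
        imbalance (mset_of_nat a) d - imbalance (mset_of_nat b) d"
      by simp
    then show "int d dvd (imbalance x d - imbalance y d) - (imbalance x' d - imbalance y' d)"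
      using balanced_dvd[OF ab(1) \<open>d \<in> C\<close>] balanced_dvd[OF ab(2) \<open>d \<in> C\<close>] by simp
  next
    assume primes: "set_mset x' \<subseteq> prime_set C" "set_mset y' \<subseteq> prime_set C"
      and dvd: "\<forall>d\<in>C. int d dvd (imbalance x d - imbalance y d) - (imbalance x' d - imbalance y' d)"
    define u v where "u = x + y'" and "v = x' + y"
    define w where "w = odd_pad C u"
    have u: "u + w \<in> balanced_msets C"
      unfolding w_def using assms(1,2) by (rule padded_balanced) (use primes_xy primes in \<open>auto simp: u_def\<close>)
    have v: "v + w \<in> balanced_msets C"
      unfolding balanced_msets_def
    proof (intro CollectI conjI ballI)
      show "set_mset (v + w) \<subseteq> prime_set C"
        using primes_xy primes set_mset_pads by (auto simp: v_def w_def)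
      fix d assume "d \<in> C"
      have "int d dvd imbalance (u + w) d"
        using u \<open>d \<in> C\<close> unfolding balanced_msets_def by blast
      then have "int d dvd imbalance (u + w) d - ((imbalance x d - imbalance y d) - (imbalance x' d - imbalance y' d))"
        using dvd \<open>d \<in> C\<close> by (blast intro: dvd_diff)
      also have "imbalance (u + w) d - ((imbalance x d - imbalance y d) - (imbalance x' d - imbalance y' d)) =
          imbalance (v + w) d"
        by (simp add: u_def v_def)
      finally show "int d dvd imbalance (v + w) d" .
    qed
    have "\<exists>a\<in>carrier (balanced_monoid C). \<exists>b\<in>carrier (balanced_monoid C).
        x + y' + mset_of_nat b = x' + y + mset_of_nat a"
      by (rule bexI[of _ "nat_of_mset (u + w)"], rule bexI[of _ "nat_of_mset (v + w)"])
        (use u v in \<open>simp_all add: u_def v_def\<close>)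
    then show "((x, y), (x', y')) \<in> class_rel (balanced_monoid C) (prime_set C) mset_of_nat"
      using primes_xy primes unfolding class_rel_def by blast
  qed
  also have "\<dots> \<longleftrightarrow> q' \<in> {(x, y). set_mset x \<subseteq> prime_set C \<and> set_mset y \<subseteq> prime_set C} \<and>
      class_invariant C q' = class_invariant C (x, y)"
    by (auto simp: q class_invariant_def mod_eq_dvd_iff fun_eq_iff dvd_diff_commute)
  finally show ?thesis by (simp add: q)
qed

lemma finite_class_group_balanced_monoid:
  assumes "finite C" "C \<subseteq> {2..}"
  shows "finite (class_group (balanced_monoid C) (prime_set C) mset_of_nat)"
  unfolding class_group_def
proof (rule finite_quotient_by_invariant)
  show "(q, q') \<in> class_rel (balanced_monoid C) (prime_set C) mset_of_nat \<longleftrightarrow>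
      q' \<in> {(x, y). set_mset x \<subseteq> prime_set C \<and> set_mset y \<subseteq> prime_set C} \<and>
      class_invariant C q' = class_invariant C q"
    if "q \<in> {(x, y). set_mset x \<subseteq> prime_set C \<and> set_mset y \<subseteq> prime_set C}" for q q'
    using assms that by (rule class_rel_balanced_monoid_iff)
  have "class_invariant C ` X \<subseteq> PiE C (\<lambda>d. {0..<int d})" for X
    using assms(2) by (auto simp: class_invariant_def)
  then show "finite (class_invariant C ` {(x, y). set_mset x \<subseteq> prime_set C \<and> set_mset y \<subseteq> prime_set C})"
    using assms(1) by (meson finite_PiE finite_atLeastLessThan_int finite_subset)
qed

theorem proposition3p2:
  fixes C :: "nat set"
  assumes "finite C" and "C \<noteq> {}" and "C \<subseteq> {2..}"
  shows "\<exists>(H :: nat monoid) (P :: nat set) (\<phi> :: nat \<Rightarrow> nat multiset).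
           krull_monoid_via H P \<phi> \<and> finitely_generated H \<and> finite (class_group H P \<phi>) \<and>
           Rset H = C \<and> Ca H = C \<and> daleth_star H = C - {2}"
proof (intro exI conjI)
  show "krull_monoid_via (balanced_monoid C) (prime_set C) mset_of_nat"
    unfolding krull_monoid_via_def
    using comm_monoid_cancel_balanced_monoid divisor_theory_balanced_monoid[OF assms(1,3)] by blast
  show "finitely_generated (balanced_monoid C)"
    using assms(1,3) by (rule finitely_generated_balanced_monoid)
  show "finite (class_group (balanced_monoid C) (prime_set C) mset_of_nat)"
    using assms(1,3) by (rule finite_class_group_balanced_monoid)
  show "Rset (balanced_monoid C) = C"
    using assms(3) by (rule Rset_balanced_monoid)
  show "Ca (balanced_monoid C) = C"
    using assms(1,3) by (rule Ca_balanced_monoid)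
  show "daleth_star (balanced_monoid C) = C - {2}"
    using assms(3) by (rule daleth_star_balanced_monoid)
qed

end
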